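(* Let $N\ge1$ be an integer, let $\alpha>-1$ be real, and for $z\in\mathbb{C}\setminus\{0\}$ define $$H(z,N,\alpha)=\frac{\Gamma(N+1)}{(\alpha+2)_N}\sum_{m=0}^{N-1}\frac{(\alpha+1)_m}{m!}\,z^{-m}.$$ Then $$H(z,N,\alpha)=\frac{N}{N+\alpha+1}\,z^{1-N}\,{}_2F_1\!\left(\begin{matrix}1-N,\ 1\\ \alpha+2\end{matrix};1-z\right).$$
   Context: $(a)_k=a(a+1)\cdots(a+k-1)$ is the Pochhammer symbol, $(a)_0=1$. ${}_2F_1\!\left(\begin{matrix}1-N,1\\ c\end{matrix};u\right)=\sum_{k=0}^{N-1}\frac{(1-N)_k(1)_k}{(c)_k\,k!}u^k$ (a polynomial in $u$). $H(z,N,\alpha)$ is the $z$-transform of the zeroth-order orthogonal (Hahn, with $\beta=0$) low-pass filter with impulse response $\frac{\Gamma(N+1)}{(\alpha+2)_N}\frac{(\alpha+1)_m}{m!}$, $0\le m\le N-1$. *)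

theory Defs
  imports "HOL-Analysis.Analysis"
begin

definition hyp2F1_poly :: "nat \<Rightarrow> real \<Rightarrow> complex \<Rightarrow> complex" where
  "hyp2F1_poly N c u =
     (\<Sum>k<N. of_real (pochhammer (1 - real N) k * pochhammer 1 k
                      / (pochhammer c k * fact k)) * u ^ k)"

definition H :: "complex \<Rightarrow> nat \<Rightarrow> real \<Rightarrow> complex" where
  "H z N \<alpha> = of_real (Gamma (real N + 1) / pochhammer (\<alpha> + 2) N) *
     (\<Sum>m<N. of_real (pochhammer (\<alpha> + 1) m / fact m) * z powi (- int m))"

end

(* Set a = \<alpha> + 1 and N = n + 1. Up to the factor z powi (-n), the filter is
   Q_n(z) = \<Sum>m\<le>n. (a)_m/m! z^(n-m), which satisfies Q_(n+1) = z Q_n + (a)_(n+1)/(n+1)!.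
   Comparing coefficients, F_n(u) = 2F1(-n, 1; a+1; u) satisfies the contiguous relation
   (a+1+n) F_(n+1)(u) = (n+1)(1-u) F_n(u) + a. Hence n!/(a+1)_n Q_n(z) and F_n(1-z) obey the
   same recurrence with the same start value 1, and are equal. *)

theory Submission
  imports Defs
begin

definition hypergeom_coeff :: "nat \<Rightarrow> 'a::field_char_0 \<Rightarrow> nat \<Rightarrow> 'a" where
  "hypergeom_coeff n c k = pochhammer (- of_nat n) k / pochhammer c k"

text \<open>\<open>hypergeom_poly n c u\<close> is 2F1(-n, 1; c; u): the factor (1)_k/k! is 1.\<close>
definition hypergeom_poly :: "nat \<Rightarrow> 'a::field_char_0 \<Rightarrow> 'a \<Rightarrow> 'a" where
  "hypergeom_poly n c u = (\<Sum>k\<le>n. hypergeom_coeff n c k * u ^ k)"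

lemma hypergeom_coeff_0 [simp]: "hypergeom_coeff n c 0 = 1"
  by (simp add: hypergeom_coeff_def)

lemma hypergeom_coeff_beyond: "n < k \<Longrightarrow> hypergeom_coeff n c k = 0"
  by (simp add: hypergeom_coeff_def pochhammer_of_nat_eq_0_lemma)

lemma hypergeom_coeff_Suc_Suc:
  assumes "pochhammer c (Suc j) \<noteq> 0"
  shows "(c + of_nat n) * hypergeom_coeff (Suc n) c (Suc j)
           = of_nat (Suc n) * (hypergeom_coeff n c (Suc j) - hypergeom_coeff n c j)"
proof -
  have nonzero: "pochhammer c j \<noteq> 0" "c + of_nat j \<noteq> 0"
    using assms by (auto simp: pochhammer_Suc)
  have rec: "pochhammer (- of_nat (Suc n)) (Suc j) = - of_nat (Suc n) * pochhammer (- of_nat n :: 'a) j"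
    by (simp add: pochhammer_rec algebra_simps)
  show ?thesis
    unfolding hypergeom_coeff_def rec pochhammer_Suc[of c] pochhammer_Suc[of "- of_nat n"]
    using nonzero by (simp add: divide_simps) (simp add: algebra_simps)
qed

lemma hypergeom_poly_split:
  "hypergeom_poly n c u = 1 + (\<Sum>j\<le>n. hypergeom_coeff n c (Suc j) * u ^ Suc j)"
proof -
  have "hypergeom_poly n c u = (\<Sum>k\<le>Suc n. hypergeom_coeff n c k * u ^ k)"
    by (simp add: hypergeom_poly_def hypergeom_coeff_beyond)
  then show ?thesis
    by (simp only: sum.atMost_Suc_shift) simp
qed

lemma hypergeom_poly_Suc:
  assumes "pochhammer c (Suc n) \<noteq> 0"
  shows "(c + of_nat n) * hypergeom_poly (Suc n) c u
           = of_nat (Suc n) * (1 - u) * hypergeom_poly n c u + c - 1"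
proof -
  have coeff: "(c + of_nat n) * hypergeom_coeff (Suc n) c (Suc j)
                 = of_nat (Suc n) * (hypergeom_coeff n c (Suc j) - hypergeom_coeff n c j)"
    if "j \<in> {..n}" for j
    using that by (intro hypergeom_coeff_Suc_Suc pochhammer_neq_0_mono[OF assms]) simp
  have shifted: "u * hypergeom_poly n c u = (\<Sum>j\<le>n. hypergeom_coeff n c j * u ^ Suc j)"
    by (simp add: hypergeom_poly_def sum_distrib_left algebra_simps)
  have "(c + of_nat n) * hypergeom_poly (Suc n) c u
          = c + of_nat n + (\<Sum>j\<le>n. (c + of_nat n) * hypergeom_coeff (Suc n) c (Suc j) * u ^ Suc j)"
    by (simp add: hypergeom_poly_split[of "Suc n"] hypergeom_coeff_beyond distrib_left
        sum_distrib_left mult.assoc)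
  also have "\<dots> = c + of_nat n + of_nat (Suc n) *
              (\<Sum>j\<le>n. (hypergeom_coeff n c (Suc j) - hypergeom_coeff n c j) * u ^ Suc j)"
    by (simp add: coeff sum_distrib_left mult.assoc del: of_nat_Suc)
  also have "\<dots> = c + of_nat n + of_nat (Suc n) * (hypergeom_poly n c u - 1 - u * hypergeom_poly n c u)"
  proof -
    have "(\<Sum>j\<le>n. (hypergeom_coeff n c (Suc j) - hypergeom_coeff n c j) * u ^ Suc j)
            = (hypergeom_poly n c u - 1) - u * hypergeom_poly n c u"
      unfolding shifted left_diff_distrib sum_subtractf by (simp add: hypergeom_poly_split[of n])
    then show ?thesis by simp
  qed
  finally show ?thesis by (simp add: algebra_simps)
qed

text \<open>z^n times the n-th partial sum of \<open>\<Sum>m. (a)_m/m! w^m = (1 - w)^(-a)\<close> at \<open>w = 1/z\<close>.\<close>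
definition binomial_series_rev :: "'a::field_char_0 \<Rightarrow> nat \<Rightarrow> 'a \<Rightarrow> 'a" where
  "binomial_series_rev a n z = (\<Sum>m\<le>n. pochhammer a m / fact m * z ^ (n - m))"

lemma binomial_series_rev_Suc:
  "binomial_series_rev a (Suc n) z = z * binomial_series_rev a n z + pochhammer a (Suc n) / fact (Suc n)"
proof -
  have "(\<Sum>m\<le>n. pochhammer a m / fact m * z ^ (Suc n - m)) = z * binomial_series_rev a n z"
    unfolding binomial_series_rev_def sum_distrib_left
    by (intro sum.cong refl) (simp add: Suc_diff_le algebra_simps)
  then show ?thesis
    by (simp add: binomial_series_rev_def)
qed

lemma binomial_series_rev_eq_hypergeom_poly:
  assumes "pochhammer (a + 1) n \<noteq> 0"
  shows "fact n / pochhammer (a + 1) n * binomial_series_rev a n z = hypergeom_poly n (a + 1) (1 - z)"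
  using assms
proof (induction n)
  case 0
  then show ?case by (simp add: binomial_series_rev_def hypergeom_poly_def)
next
  case (Suc n)
  let ?P = "pochhammer (a + 1) n" and ?s = "a + 1 + of_nat n"
  have nonzero: "?P \<noteq> 0" "?s \<noteq> 0" "of_nat (Suc n) \<noteq> (0 :: 'a)"
    using Suc.prems by (auto simp: pochhammer_Suc simp del: of_nat_Suc)
  have "fact (Suc n) / pochhammer (a + 1) (Suc n) * binomial_series_rev a (Suc n) z
          = (of_nat (Suc n) * z * (fact n / ?P * binomial_series_rev a n z) + a) / ?s"
    unfolding binomial_series_rev_Suc pochhammer_Suc[of "a + 1"] pochhammer_rec[of a] fact_Suc
    using nonzero by (simp add: divide_simps)
  also have "\<dots> = hypergeom_poly (Suc n) (a + 1) (1 - z)"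
    unfolding Suc.IH[OF nonzero(1)] using hypergeom_poly_Suc[OF Suc.prems, of "1 - z"] nonzero
    by (simp add: divide_simps) (simp add: algebra_simps)
  finally show ?case .
qed

lemma hyp2F1_poly_Suc_eq_hypergeom_poly:
  "hyp2F1_poly (Suc n) c u = hypergeom_poly n (of_real c) u"
  unfolding hyp2F1_poly_def hypergeom_poly_def hypergeom_coeff_def lessThan_Suc_atMost
  by (intro sum.cong refl) (simp add: pochhammer_fact[symmetric] pochhammer_of_real[symmetric])

lemma sum_mult_powi_minus:
  fixes z :: "'a::field"
  assumes "z \<noteq> 0"
  shows "(\<Sum>m\<le>n. b m * z powi (- int m)) = z powi (- int n) * (\<Sum>m\<le>n. b m * z ^ (n - m))"
  unfolding sum_distrib_left
proof (intro sum.cong refl)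
  fix m assume "m \<in> {..n}"
  then have "z powi (- int m) = z powi (- int n + int (n - m))"
    by (simp add: of_nat_diff)
  also have "\<dots> = z powi (- int n) * z ^ (n - m)"
    using assms by (subst power_int_add) auto
  finally show "b m * z powi (- int m) = z powi (- int n) * (b m * z ^ (n - m))"
    by simp
qed

lemma H_Suc_eq_binomial_series_rev:
  assumes "z \<noteq> 0"
  shows "H z (Suc n) \<alpha> = of_real (fact (Suc n) / pochhammer (\<alpha> + 2) (Suc n)) * z powi (- int n)
           * binomial_series_rev (of_real (\<alpha> + 1)) n z"
proof -
  have "Gamma (real (Suc n) + 1) = fact (Suc n)"
    using Gamma_fact[of "Suc n"] by (simp add: add.commute)
  then show ?thesis
    unfolding H_def binomial_series_rev_def lessThan_Suc_atMost sum_mult_powi_minus[OF assms]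
    by (simp add: pochhammer_of_real[symmetric])
qed

theorem mainTheorem3:
  fixes N :: nat and \<alpha> :: real and z :: complex
  assumes "N \<ge> 1" and "\<alpha> > -1" and "z \<noteq> 0"
  shows "H z N \<alpha> = of_real (real N / (real N + \<alpha> + 1)) * z powi (1 - int N)
           * hyp2F1_poly N (\<alpha> + 2) (1 - z)"
proof -
  obtain n where N: "N = Suc n"
    using assms(1) by (cases N) auto
  define a where "a = complex_of_real (\<alpha> + 1)"
  define Q where "Q = binomial_series_rev a n z"
  have pochhammer_a: "pochhammer (a + 1) n = of_real (pochhammer (\<alpha> + 2) n)"
    by (simp add: a_def pochhammer_of_real[symmetric] add.assoc)
  have pos: "pochhammer (\<alpha> + 2) n > 0" "real N + \<alpha> + 1 > 0"
    using assms(2) by (auto intro!: pochhammer_pos)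
  have "hyp2F1_poly N (\<alpha> + 2) (1 - z) = hypergeom_poly n (a + 1) (1 - z)"
    by (simp add: N hyp2F1_poly_Suc_eq_hypergeom_poly a_def add.assoc)
  also have "\<dots> = of_real (fact n / pochhammer (\<alpha> + 2) n) * Q"
    using pos by (simp add: Q_def binomial_series_rev_eq_hypergeom_poly[symmetric] pochhammer_a)
  finally have "of_real (real N / (real N + \<alpha> + 1)) * z powi (1 - int N) * hyp2F1_poly N (\<alpha> + 2) (1 - z)
      = of_real (real N / (real N + \<alpha> + 1) * (fact n / pochhammer (\<alpha> + 2) n)) * z powi (- int n) * Q"
    by (simp add: N)
  also have "real N / (real N + \<alpha> + 1) * (fact n / pochhammer (\<alpha> + 2) n) = fact N / pochhammer (\<alpha> + 2) N"
    using pos by (simp add: N pochhammer_Suc field_simps)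
  finally show ?thesis
    using assms(3) by (simp add: N Q_def a_def H_Suc_eq_binomial_series_rev)
qed

end
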